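(* Let $\mathcal L=(\Sigma,X)$ be a language, $\Lambda$ a fuzzy theory in $\mathcal L$ and $\Gamma$ a set of formulas of $\mathcal L$. Let $\Lambda[\Gamma]=\Lambda\cup\{\emptyset\vdash\phi\mid\phi\in\Gamma\}$. Then for every set of formulas $\Delta$ and formula $\psi$: (1) if $(\Gamma\cup\Delta\vdash\psi)\in\Lambda^{\vdash}$ then $(\Delta\vdash\psi)\in(\Lambda[\Gamma])^{\vdash}$; (2) if $\Delta\vdash\psi$ is derivable from $\Lambda[\Gamma]$ without using rule (Sub) — i.e. it belongs to the smallest set of sequents containing $\Lambda[\Gamma]$ and closed under all rules of the calculus except (Sub) — then $(\Gamma\cup\Delta\vdash\psi)\in\Lambda^{\vdash}$.
   Context: $H$ is a frame with bottom $\bot$. A signature $\Sigma=(O,\mathrm{ar},C)$ consists of a set $O$ of operation symbols with arity $\mathrm{ar}:O\to\{1,2,3,\dots\}$ and a set $C$ of constant symbols. A language is a pair $\mathcal L=(\Sigma,X)$ with $X$ a set of variables. $\mathrm{Terms}(\mathcal L)$ is the smallest set containing $X\sqcup C$ and containing $f(t_1,\dots,t_{\mathrm{ar}(f)})$ whenever $f\in O$ and all $t_i\in\mathrm{Terms}(\mathcal L)$. A formula is either an equation $s\equiv t$ ($s,t$ terms) or a membership proposition $\mathsf E_l(t)$ with $l\in H$ and $t$ a term. A sequent $\Gamma\vdash\psi$ is a pair of a (possibly infinite) set $\Gamma$ of formulas and a formula $\psi$; $\vdash\psi$ means $\emptyset\vdash\psi$. A fuzzy theory in $\mathcal L$ is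 a set of sequents. For $\sigma:X\to\mathrm{Terms}(\mathcal L)$, $t[\sigma]$ is simultaneous substitution, extended to formulas by $(s\equiv t)[\sigma]=(s[\sigma]\equiv t[\sigma])$, $\mathsf E_l(t)[\sigma]=\mathsf E_l(t[\sigma])$, and to sets of formulas elementwise. The rules of the fuzzy sequent calculus are (for all sets of formulas $\Gamma,\Delta,\Phi$, formulas $\phi,\psi$, terms, $l,l'\in H$): (A) $\Gamma\vdash\phi$ if $\phi\in\Gamma$; (Weak) from $\Gamma\vdash\phi$ infer $\Gamma\cup\Delta\vdash\phi$; (Cut) from $\Gamma\vdash\phi$ for all $\phi\in\Phi$ and $\Phi\vdash\psi$ infer $\Gamma\vdash\psi$; (Refl) $\Gamma\vdash s\equiv s$; (Sym) from $\Gamma\vdash s\equiv t$ infer $\Gamma\vdash t\equiv s$; (Trans) from $\Gamma\vdash s\equiv t$ and $\Gamma\vdash t\equiv u$ infer $\Gamma\vdash s\equiv u$; (Sub) from $\Gamma\vdash\psi$ infer $\Gamma[\sigma]\vdash\psi[\sigma]$ for any $\sigma:X\to\mathrm{Terms}(\mathcal L)$; (Cong) for $f\in O$ with $n=\mathrm{ar}(f)$, from $\Gamma\vdash t_i\equiv s_i$ ($i=1,\dots,n$) infer $\Gamma\vdash f(t_1,\dots,t_n)\equiv f(s_1,\dots,s_n)$; (Inf) $\Gamma\vdash\mathsf E_\bot(t)$; (Mon) from $\Gamma\vdash\mathsf E_l(t)$ infer $\Gamma\vdash\mathsf E_{l\wedge l'}(t)$; (Exp) for $f\in O$ with $n=\mathrm{ar}(f)$,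 from $\Gamma\vdash\mathsf E_{l_i}(t_i)$ ($i=1,\dots,n$) infer $\Gamma\vdash\mathsf E_{l_1\wedge\dots\wedge l_n}(f(t_1,\dots,t_n))$; (Sup) for $S\subseteq H$, from $\Gamma\vdash\mathsf E_l(t)$ for all $l\in S$ infer $\Gamma\vdash\mathsf E_{\sup S}(t)$; (Fun) from $\Gamma\vdash t\equiv s$ and $\Gamma\vdash\mathsf E_l(t)$ infer $\Gamma\vdash\mathsf E_l(s)$. The deductive closure $\Lambda^{\vdash}$ of a theory $\Lambda$ is the smallest set of sequents containing $\Lambda$ and closed under all these rules. *)

theory Defs
  imports Main
begin

definition is_frame :: "'h::complete_lattice itself \<Rightarrow> bool" where
  "is_frame _ \<longleftrightarrow> (\<forall>(a::'h) S. inf a (Sup S) = (SUP s\<in>S. inf a s))"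

datatype ('o, 'c, 'v) trm = Var 'v | Const 'c | App 'o "('o, 'c, 'v) trm list"

text \<open>Terms of the language L = ((Ops, ar, C), X).\<close>
inductive_set Terms :: "'o set \<Rightarrow> ('o \<Rightarrow> nat) \<Rightarrow> 'c set \<Rightarrow> 'v set \<Rightarrow> ('o, 'c, 'v) trm set"
  for Ops ar C X where
  var: "x \<in> X \<Longrightarrow> Var x \<in> Terms Ops ar C X"
| const: "c \<in> C \<Longrightarrow> Const c \<in> Terms Ops ar C X"
| app: "f \<in> Ops \<Longrightarrow> length ts = ar f \<Longrightarrow> (\<forall>t\<in>set ts. t \<in> Terms Ops ar C X)
        \<Longrightarrow> App f ts \<in> Terms Ops ar C X"

text \<open>Formulas: equations s \<equiv> t and membership propositions E_l(t).\<close>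
datatype ('h, 'o, 'c, 'v) fm = Eq "('o, 'c, 'v) trm" "('o, 'c, 'v) trm" | Ele 'h "('o, 'c, 'v) trm"

definition Fm :: "'o set \<Rightarrow> ('o \<Rightarrow> nat) \<Rightarrow> 'c set \<Rightarrow> 'v set \<Rightarrow> ('h, 'o, 'c, 'v) fm set" where
  "Fm Ops ar C X = {Eq s t | s t. s \<in> Terms Ops ar C X \<and> t \<in> Terms Ops ar C X}
              \<union> {Ele l t | l t. t \<in> Terms Ops ar C X}"

type_synonym ('h, 'o, 'c, 'v) seq = "('h, 'o, 'c, 'v) fm set \<times> ('h, 'o, 'c, 'v) fm"

fun tsubst :: "('v \<Rightarrow> ('o, 'c, 'v) trm) \<Rightarrow> ('o, 'c, 'v) trm \<Rightarrow> ('o, 'c, 'v) trm" where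
  "tsubst \<sigma> (Var x) = \<sigma> x"
| "tsubst \<sigma> (Const c) = Const c"
| "tsubst \<sigma> (App f ts) = App f (map (tsubst \<sigma>) ts)"

fun fsubst :: "('v \<Rightarrow> ('o, 'c, 'v) trm) \<Rightarrow> ('h, 'o, 'c, 'v) fm \<Rightarrow> ('h, 'o, 'c, 'v) fm" where
  "fsubst \<sigma> (Eq s t) = Eq (tsubst \<sigma> s) (tsubst \<sigma> t)"
| "fsubst \<sigma> (Ele l t) = Ele l (tsubst \<sigma> t)"

text \<open>Derivability in the fuzzy sequent calculus from the theory Lam.
  If usesub is True all rules are available (deductive closure);
  if usesub is False, rule (Sub) is omitted.\<close>
inductive deriv :: "'o set \<Rightarrow> ('o \<Rightarrow> nat) \<Rightarrow> 'c set \<Rightarrow> 'v set \<Rightarrow> bool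
     \<Rightarrow> ('h::complete_lattice, 'o, 'c, 'v) seq set \<Rightarrow> ('h, 'o, 'c, 'v) seq \<Rightarrow> bool"
  for Ops ar C X usesub Lam where
  Hyp: "s \<in> Lam \<Longrightarrow> deriv Ops ar C X usesub Lam s"
| A: "\<Gamma> \<subseteq> Fm Ops ar C X \<Longrightarrow> \<phi> \<in> \<Gamma> \<Longrightarrow> deriv Ops ar C X usesub Lam (\<Gamma>, \<phi>)"
| Weak: "deriv Ops ar C X usesub Lam (\<Gamma>, \<phi>) \<Longrightarrow> \<Delta> \<subseteq> Fm Ops ar C X
         \<Longrightarrow> deriv Ops ar C X usesub Lam (\<Gamma> \<union> \<Delta>, \<phi>)"
| Cut: "\<forall>\<phi>\<in>\<Phi>. deriv Ops ar C X usesub Lam (\<Gamma>, \<phi>) \<Longrightarrow> deriv Ops ar C X usesub Lam (\<Phi>, \<psi>)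
        \<Longrightarrow> \<Gamma> \<subseteq> Fm Ops ar C X \<Longrightarrow> deriv Ops ar C X usesub Lam (\<Gamma>, \<psi>)"
| Refl: "\<Gamma> \<subseteq> Fm Ops ar C X \<Longrightarrow> s \<in> Terms Ops ar C X \<Longrightarrow> deriv Ops ar C X usesub Lam (\<Gamma>, Eq s s)"
| Sym: "deriv Ops ar C X usesub Lam (\<Gamma>, Eq s t) \<Longrightarrow> deriv Ops ar C X usesub Lam (\<Gamma>, Eq t s)"
| Trans: "deriv Ops ar C X usesub Lam (\<Gamma>, Eq s t) \<Longrightarrow> deriv Ops ar C X usesub Lam (\<Gamma>, Eq t u)
          \<Longrightarrow> deriv Ops ar C X usesub Lam (\<Gamma>, Eq s u)"
| Sub: "usesub \<Longrightarrow> deriv Ops ar C X usesub Lam (\<Gamma>, \<psi>) \<Longrightarrow> (\<forall>x\<in>X. \<sigma> x \<in> Terms Ops ar C X)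
        \<Longrightarrow> deriv Ops ar C X usesub Lam (fsubst \<sigma> ` \<Gamma>, fsubst \<sigma> \<psi>)"
| Cong: "f \<in> Ops \<Longrightarrow> length ts = ar f \<Longrightarrow> length ss = ar f
         \<Longrightarrow> (\<forall>i < ar f. deriv Ops ar C X usesub Lam (\<Gamma>, Eq (ts ! i) (ss ! i)))
         \<Longrightarrow> \<Gamma> \<subseteq> Fm Ops ar C X
         \<Longrightarrow> deriv Ops ar C X usesub Lam (\<Gamma>, Eq (App f ts) (App f ss))"
| Inf: "\<Gamma> \<subseteq> Fm Ops ar C X \<Longrightarrow> t \<in> Terms Ops ar C X \<Longrightarrow> deriv Ops ar C X usesub Lam (\<Gamma>, Ele bot t)"
| Mon: "deriv Ops ar C X usesub Lam (\<Gamma>, Ele l t) \<Longrightarrow> deriv Ops ar C X usesub Lam (\<Gamma>, Ele (inf l l') t)"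
| Exp: "f \<in> Ops \<Longrightarrow> length ts = ar f \<Longrightarrow> length ls = ar f
         \<Longrightarrow> (\<forall>i < ar f. deriv Ops ar C X usesub Lam (\<Gamma>, Ele (ls ! i) (ts ! i)))
         \<Longrightarrow> \<Gamma> \<subseteq> Fm Ops ar C X
         \<Longrightarrow> deriv Ops ar C X usesub Lam (\<Gamma>, Ele (Inf (set ls)) (App f ts))"
| Sup: "(\<forall>l\<in>S. deriv Ops ar C X usesub Lam (\<Gamma>, Ele l t)) \<Longrightarrow> \<Gamma> \<subseteq> Fm Ops ar C X
        \<Longrightarrow> t \<in> Terms Ops ar C X \<Longrightarrow> deriv Ops ar C X usesub Lam (\<Gamma>, Ele (Sup S) t)"
| Fun: "deriv Ops ar C X usesub Lam (\<Gamma>, Eq t s) \<Longrightarrow> deriv Ops ar C X usesub Lam (\<Gamma>, Ele l t)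
        \<Longrightarrow> deriv Ops ar C X usesub Lam (\<Gamma>, Ele l s)"

definition closure :: "'o set \<Rightarrow> ('o \<Rightarrow> nat) \<Rightarrow> 'c set \<Rightarrow> 'v set
     \<Rightarrow> ('h::complete_lattice, 'o, 'c, 'v) seq set \<Rightarrow> ('h, 'o, 'c, 'v) seq set" where
  "closure Ops ar C X Lam = {s. deriv Ops ar C X True Lam s}"

definition closure_nosub :: "'o set \<Rightarrow> ('o \<Rightarrow> nat) \<Rightarrow> 'c set \<Rightarrow> 'v set
     \<Rightarrow> ('h::complete_lattice, 'o, 'c, 'v) seq set \<Rightarrow> ('h, 'o, 'c, 'v) seq set" where
  "closure_nosub Ops ar C X Lam = {s. deriv Ops ar C X False Lam s}"

definition is_theory :: "'o set \<Rightarrow> ('o \<Rightarrow> nat) \<Rightarrow> 'c set \<Rightarrow> 'v set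
     \<Rightarrow> ('h, 'o, 'c, 'v) seq set \<Rightarrow> bool" where
  "is_theory Ops ar C X Lam \<longleftrightarrow> (\<forall>(\<Gamma>, \<phi>)\<in>Lam. \<Gamma> \<subseteq> Fm Ops ar C X \<and> \<phi> \<in> Fm Ops ar C X)"

definition extend :: "('h, 'o, 'c, 'v) seq set \<Rightarrow> ('h, 'o, 'c, 'v) fm set \<Rightarrow> ('h, 'o, 'c, 'v) seq set" where
  "extend Lam \<Gamma> = Lam \<union> {({}, \<phi>) | \<phi>. \<phi> \<in> \<Gamma>}"

end

theory Submission
  imports Defs
begin

text \<open>For (1), the formulas of \<open>\<Gamma>\<close> become axioms of \<open>\<Lambda>[\<Gamma>]\<close>, so a single cut removes them
  from the antecedent. For (2), one carries \<open>\<Gamma>\<close> along in every antecedent of a derivation from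
  \<open>\<Lambda>[\<Gamma>]\<close>: each rule except (Sub) commutes with enlarging the antecedent, and an axiom
  \<open>\<emptyset> \<turnstile> \<phi>\<close> with \<open>\<phi> \<in> \<Gamma>\<close> becomes an instance of (A). Rule (Sub) would have to substitute into
  \<open>\<Gamma>\<close> itself, which is why it is excluded.\<close>

lemma deriv_mono_theory:
  assumes "deriv Ops ar C X b L s" and "L \<subseteq> L'"
  shows "deriv Ops ar C X b L' s"
  using assms by (induction rule: deriv.induct) (auto intro: deriv.intros)

lemma deriv_weaken_left:
  assumes "deriv Ops ar C X b L (\<Gamma>, \<phi>)" and "\<Delta> \<subseteq> Fm Ops ar C X"
  shows "deriv Ops ar C X b L (\<Delta> \<union> \<Gamma>, \<phi>)"
  using deriv.Weak[OF assms] by (simp add: Un_commute)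

lemma deriv_extend_axiom:
  assumes "\<phi> \<in> G" and "\<Delta> \<subseteq> Fm Ops ar C X"
  shows "deriv Ops ar C X b (extend L G) (\<Delta>, \<phi>)"
proof -
  have "deriv Ops ar C X b (extend L G) ({}, \<phi>)"
    using assms(1) by (intro deriv.Hyp) (simp add: extend_def)
  from deriv.Weak[OF this assms(2)] show ?thesis by simp
qed

lemma deriv_extend_cut_hyps:
  assumes "deriv Ops ar C X b (extend L G) (G \<union> \<Delta>, \<psi>)" and "\<Delta> \<subseteq> Fm Ops ar C X"
  shows "deriv Ops ar C X b (extend L G) (\<Delta>, \<psi>)"
proof (rule deriv.Cut[OF _ assms])
  show "\<forall>\<phi>\<in>G \<union> \<Delta>. deriv Ops ar C X b (extend L G) (\<Delta>, \<phi>)"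
    using assms(2) by (auto intro: deriv_extend_axiom deriv.A)
qed

lemma deriv_nosub_extend_imp_deriv:
  assumes "deriv Ops ar C X False (extend L G) (\<Delta>, \<psi>)" and G: "G \<subseteq> Fm Ops ar C X"
  shows "deriv Ops ar C X b L (G \<union> \<Delta>, \<psi>)"
  using assms(1)
proof (induction "(\<Delta>, \<psi>)" arbitrary: \<Delta> \<psi> rule: deriv.induct)
  case Hyp
  then consider "(\<Delta>, \<psi>) \<in> L" | "\<Delta> = {}" "\<psi> \<in> G"
    unfolding extend_def by blast
  then show ?case
  proof cases
    case 1
    then show ?thesis using deriv_weaken_left[OF deriv.Hyp G] by blast
  next
    case 2
    then show ?thesis using deriv.A[OF G] by simp
  qed
next
  case (Weak \<Gamma> \<phi> \<Delta>')
  from deriv.Weak[OF Weak(2,3)] show ?case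
    by (simp add: Un_assoc)
next
  case (Cut \<Phi> \<Delta> \<psi>)
  have "\<forall>\<phi>\<in>G \<union> \<Phi>. deriv Ops ar C X b L (G \<union> \<Delta>, \<phi>)"
    using Cut(1,4) G by (auto intro: deriv.A)
  with Cut(3,4) G show ?case
    by (auto intro: deriv.Cut)
qed (use G in \<open>auto intro: deriv.intros simp: Un_assoc\<close>)

theorem lemma9:
  fixes Ops :: "'o set" and ar :: "'o \<Rightarrow> nat" and C :: "'c set" and X :: "'v set"
    and Lam :: "('h::complete_lattice, 'o, 'c, 'v) seq set" and \<Gamma> :: "('h, 'o, 'c, 'v) fm set"
  assumes frame: "is_frame TYPE('h)"
    and arity: "\<forall>f\<in>Ops. ar f \<ge> 1"
    and thy: "is_theory Ops ar C X Lam"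
    and Gamma: "\<Gamma> \<subseteq> Fm Ops ar C X"
  shows "\<forall>\<Delta> \<psi>. \<Delta> \<subseteq> Fm Ops ar C X \<longrightarrow> \<psi> \<in> Fm Ops ar C X \<longrightarrow>
           ((\<Gamma> \<union> \<Delta>, \<psi>) \<in> closure Ops ar C X Lam \<longrightarrow> (\<Delta>, \<psi>) \<in> closure Ops ar C X (extend Lam \<Gamma>))
         \<and> ((\<Delta>, \<psi>) \<in> closure_nosub Ops ar C X (extend Lam \<Gamma>) \<longrightarrow> (\<Gamma> \<union> \<Delta>, \<psi>) \<in> closure Ops ar C X Lam)"
proof (intro allI impI conjI)
  fix \<Delta> :: "('h, 'o, 'c, 'v) fm set" and \<psi> :: "('h, 'o, 'c, 'v) fm"
  assume \<Delta>: "\<Delta> \<subseteq> Fm Ops ar C X"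
  show "(\<Delta>, \<psi>) \<in> closure Ops ar C X (extend Lam \<Gamma>)"
    if "(\<Gamma> \<union> \<Delta>, \<psi>) \<in> closure Ops ar C X Lam"
  proof -
    have "deriv Ops ar C X True (extend Lam \<Gamma>) (\<Gamma> \<union> \<Delta>, \<psi>)"
      using that deriv_mono_theory by (fastforce simp: closure_def extend_def)
    from deriv_extend_cut_hyps[OF this \<Delta>] show ?thesis
      by (simp add: closure_def)
  qed
  show "(\<Gamma> \<union> \<Delta>, \<psi>) \<in> closure Ops ar C X Lam"
    if "(\<Delta>, \<psi>) \<in> closure_nosub Ops ar C X (extend Lam \<Gamma>)"
    using deriv_nosub_extend_imp_deriv[OF _ Gamma] that
    by (simp add: closure_def closure_nosub_def)
qed

end
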